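(* Let $a,b\in\mathrm{Act}$ with $a\neq b$. For every formula $\varphi$ of the one-variable, diamond-free fragment of $D\oplus_\subseteq K4$, $\varphi$ is satisfiable (at some state of some $D\oplus_\subseteq K4$ Kripke structure) if and only if $[\![\mathrm{trans}(\varphi)]\!]_L\neq\emptyset$.
   Context: $D\oplus_\subseteq K4$ Kripke structures are $M=(W,\xrightarrow{1},\xrightarrow{2},V)$ with $W$ nonempty, $\xrightarrow{1}$ serial ($\forall x\exists y.\,x\xrightarrow{1}y$), $\xrightarrow{2}$ transitive, $\xrightarrow{1}\subseteq\xrightarrow{2}$, and $V:W\to2^{\{p\}}$. Formulae of the one-variable diamond-free fragment: $\varphi::=p\mid\neg p\mid\varphi\vee\varphi\mid\varphi\wedge\varphi\mid[1]\varphi\mid[2]\varphi$, with $M,w\models p$ iff $p\in V(w)$, boolean connectives as usual, and $M,w\models[i]\varphi$ iff $M,w'\models\varphi$ for all $w'$ with $w\xrightarrow{i}w'$. recHML formulae over a finite action set $\mathrm{Act}$: $\varphi::=\mathrm{tt}\mid\mathrm{ff}\mid\varphi\vee\varphi\mid\varphi\wedge\varphi\mid\langle A\rangle\varphi\mid[A]\varphi\mid\min X.\varphi\mid\max X.\varphi\mid X$, with linear-time semantics over $\mathrm{Act}^\omega$: $[\![\mathrm{tt}]\!]_L=\mathrm{Act}^\omega$, $[\![\mathrm{ff}]\!]_L=\emptyset$, $\vee,\wedge$ union/intersection, $[\![\langle A\rangle\varphi,\sigma]\!]_L=\{ct\mid c\in A,t\in[\![\varphi,\sigma]\!]_L\}$,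 $[\![[A]\varphi,\sigma]\!]_L=\{t\mid\forall c\in A,\forall t'.\ t=ct'\Rightarrow t'\in[\![\varphi,\sigma]\!]_L\}$, $\min/\max$ as least/greatest fixpoints, $[\![X,\sigma]\!]_L=\sigma(X)$; singletons $\{c\}$ are written $c$. Translation: $\mathrm{trans}(\varphi)=\max X.(\langle a\rangle X\vee\langle b\rangle\langle a\rangle X)\wedge\varphi^t$, where $p^t=\langle b\rangle\mathrm{tt}$, $(\neg p)^t=[b]\mathrm{ff}$, $(\cdot)^t$ commutes with $\vee,\wedge$, $([1]\psi)^t=\max X.([b]X\wedge[a]\psi^t)$ and $([2]\psi)^t=\max X.([b]X\wedge[a]X\wedge[a]\psi^t)$ (with fresh variables $X$). *)

theory Defs
  imports Main "HOL-Library.Stream"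
begin

datatype mform = P | NP | MOr mform mform | MAnd mform mform
  | Box1 mform | Box2 mform

text \<open>A Kripke structure with world set the whole type 'w (nonempty as every HOL type),
  R1, R2 the two accessibility relations and V w = (p in V(w)).\<close>
definition kripke_DK4 :: "('w \<Rightarrow> 'w \<Rightarrow> bool) \<Rightarrow> ('w \<Rightarrow> 'w \<Rightarrow> bool) \<Rightarrow> bool" where
  "kripke_DK4 R1 R2 \<longleftrightarrow> (\<forall>x. \<exists>y. R1 x y) \<and> transp R2 \<and> (\<forall>x y. R1 x y \<longrightarrow> R2 x y)"

fun msat :: "('w \<Rightarrow> 'w \<Rightarrow> bool) \<Rightarrow> ('w \<Rightarrow> 'w \<Rightarrow> bool) \<Rightarrow> ('w \<Rightarrow> bool) \<Rightarrow> 'w \<Rightarrow> mform \<Rightarrow> bool" where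
  "msat R1 R2 V w P = V w"
| "msat R1 R2 V w NP = (\<not> V w)"
| "msat R1 R2 V w (MOr f g) = (msat R1 R2 V w f \<or> msat R1 R2 V w g)"
| "msat R1 R2 V w (MAnd f g) = (msat R1 R2 V w f \<and> msat R1 R2 V w g)"
| "msat R1 R2 V w (Box1 f) = (\<forall>w'. R1 w w' \<longrightarrow> msat R1 R2 V w' f)"
| "msat R1 R2 V w (Box2 f) = (\<forall>w'. R2 w w' \<longrightarrow> msat R1 R2 V w' f)"

datatype 'a hml = TT | FF | HOr "'a hml" "'a hml" | HAnd "'a hml" "'a hml"
  | Dia "'a set" "'a hml" | Bx "'a set" "'a hml"
  | Min nat "'a hml" | Max nat "'a hml" | Var nat

fun hsem :: "'a hml \<Rightarrow> (nat \<Rightarrow> 'a stream set) \<Rightarrow> 'a stream set" where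
  "hsem TT \<sigma> = UNIV"
| "hsem FF \<sigma> = {}"
| "hsem (HOr f g) \<sigma> = hsem f \<sigma> \<union> hsem g \<sigma>"
| "hsem (HAnd f g) \<sigma> = hsem f \<sigma> \<inter> hsem g \<sigma>"
| "hsem (Dia A f) \<sigma> = {c ## t | c t. c \<in> A \<and> t \<in> hsem f \<sigma>}"
| "hsem (Bx A f) \<sigma> = {t. \<forall>c\<in>A. \<forall>t'. t = c ## t' \<longrightarrow> t' \<in> hsem f \<sigma>}"
| "hsem (Min X f) \<sigma> = lfp (\<lambda>S. hsem f (\<sigma>(X := S)))"
| "hsem (Max X f) \<sigma> = gfp (\<lambda>S. hsem f (\<sigma>(X := S)))"
| "hsem (Var X) \<sigma> = \<sigma> X"

text \<open>Semantics of a (closed) formula; the environment is irrelevant for closed formulas.\<close>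
definition hsemL :: "'a hml \<Rightarrow> 'a stream set" where
  "hsemL f = hsem f (\<lambda>_. {})"

text \<open>The natural number n is the next fresh fixpoint variable (depth-indexed).\<close>
fun tr :: "'a \<Rightarrow> 'a \<Rightarrow> nat \<Rightarrow> mform \<Rightarrow> 'a hml" where
  "tr a b n P = Dia {b} TT"
| "tr a b n NP = Bx {b} FF"
| "tr a b n (MOr f g) = HOr (tr a b n f) (tr a b n g)"
| "tr a b n (MAnd f g) = HAnd (tr a b n f) (tr a b n g)"
| "tr a b n (Box1 f) = Max n (HAnd (Bx {b} (Var n)) (Bx {a} (tr a b (Suc n) f)))"
| "tr a b n (Box2 f) = Max n (HAnd (HAnd (Bx {b} (Var n)) (Bx {a} (Var n))) (Bx {a} (tr a b (Suc n) f)))"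

definition trans :: "'a \<Rightarrow> 'a \<Rightarrow> mform \<Rightarrow> 'a hml" where
  "trans a b f = HAnd (Max 0 (HOr (Dia {a} (Var 0)) (Dia {b} (Dia {a} (Var 0))))) (tr a b 1 f)"

end

theory Submission
  imports Defs
begin

text \<open>Diamond-free formulas are preserved when a model is pulled back along a map that
  respects both accessibility relations. Following a serial R1-path from the satisfying state
  therefore yields a model on the linear frame (\<nat>, Suc, <), so every satisfiable formula is
  satisfiable there. A valuation v on that frame is encoded as the word whose i-th block is
  "b a" if v i holds and "a" otherwise: the letter b marks p, [1] skips the current block and
  [2] skips any positive number of blocks. The first conjunct of trans forces a word to be a
  sequence of such blocks, so conversely every word satisfying the translation encodes a linear
  model of the formula.\<close>

lemma hsem_mono: "(\<And>x. \<sigma> x \<subseteq> \<sigma>' x) \<Longrightarrow> hsem f \<sigma> \<subseteq> hsem f \<sigma>'"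
proof (induction f arbitrary: \<sigma> \<sigma>')
  case (Min X f)
  then show ?case by (simp add: lfp_mono)
next
  case (Max X f)
  then show ?case by (simp add: gfp_mono)
qed (auto, blast+)

lemma mono_hsem_upd: "mono (\<lambda>S. hsem f (\<sigma>(X := S)))"
  by (rule monoI, rule hsem_mono, auto)

lemma hsem_Max_unfold: "hsem (Max X f) \<sigma> = hsem f (\<sigma>(X := hsem (Max X f) \<sigma>))"
  using gfp_unfold[OF mono_hsem_upd[of f \<sigma> X]] by simp

lemma msat_pullback:
  assumes "\<And>i j. S1 i j \<Longrightarrow> R1 (h i) (h j)" and "\<And>i j. S2 i j \<Longrightarrow> R2 (h i) (h j)"
  shows "msat R1 R2 V (h x) f \<Longrightarrow> msat S1 S2 (V \<circ> h) x f"
  by (induction f arbitrary: x) (auto simp: assms)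

lemma serial_path_exists:
  assumes "\<forall>x. \<exists>y. R x y"
  shows "\<exists>p. p 0 = w \<and> (\<forall>i. R (p i) (p (Suc i)))"
  using dependent_nat_choice[of "\<lambda>n x. n = 0 \<longrightarrow> x = w" "\<lambda>_ x y. R x y"] assms by auto

lemma transp_path_less:
  assumes "transp R" and "\<And>i. R (p i) (p (Suc i))" and "i < j"
  shows "R (p i) (p j)"
  using \<open>i < j\<close>
proof (induction j)
  case (Suc j)
  then show ?case
    using assms(1) assms(2)[of j] by (cases "i = j") (auto dest: transpD)
qed simp

lemma kripke_DK4_linear: "kripke_DK4 (\<lambda>i j. j = Suc i) ((<) :: nat \<Rightarrow> nat \<Rightarrow> bool)"
  unfolding kripke_DK4_def transp_def by auto

lemma kripke_DK4_sat_imp_linear_sat: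
  assumes "kripke_DK4 R1 R2" and "msat R1 R2 V w f"
  shows "\<exists>v. msat (\<lambda>i j. j = Suc i) (<) v 0 f"
proof -
  obtain p where "p 0 = w" and path: "\<And>i. R1 (p i) (p (Suc i))"
    using serial_path_exists assms(1) unfolding kripke_DK4_def by metis
  moreover have "R2 (p i) (p j)" if "i < j" for i j
    using transp_path_less[of R2 p, OF _ _ that] path assms(1) unfolding kripke_DK4_def by blast
  ultimately show ?thesis
    using msat_pullback[of "\<lambda>i j. j = Suc i" R1 p "(<)" R2 V 0 f] assms(2) by auto
qed

definition val_block :: "'a \<Rightarrow> 'a \<Rightarrow> (nat \<Rightarrow> bool) \<Rightarrow> nat \<Rightarrow> 'a list" where
  "val_block a b v i = (if v i then [b, a] else [a])"

definition val_word :: "'a \<Rightarrow> 'a \<Rightarrow> (nat \<Rightarrow> bool) \<Rightarrow> nat \<Rightarrow> 'a stream" where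
  "val_word a b v k = flat (smap (val_block a b v) (fromN k))"

lemma val_word_unfold:
  "val_word a b v k = (if v k then b ## a ## val_word a b v (Suc k) else a ## val_word a b v (Suc k))"
  unfolding val_word_def by (subst siterate.code) (simp add: val_block_def)

abbreviation block_words :: "'a \<Rightarrow> 'a \<Rightarrow> 'a hml" where
  "block_words a b \<equiv> Max 0 (HOr (Dia {a} (Var 0)) (Dia {b} (Dia {a} (Var 0))))"

lemma val_word_in_block_words: "val_word a b v k \<in> hsem (block_words a b) \<sigma>"
proof -
  let ?S = "range (val_word a b v)"
  have "?S \<subseteq> hsem (HOr (Dia {a} (Var 0)) (Dia {b} (Dia {a} (Var 0)))) (\<sigma>(0 := ?S))"
  proof
    fix t assume "t \<in> ?S"
    then obtain j where "t = val_word a b v j" by blast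
    then show "t \<in> hsem (HOr (Dia {a} (Var 0)) (Dia {b} (Dia {a} (Var 0)))) (\<sigma>(0 := ?S))"
      using val_word_unfold[of a b v j] by (auto split: if_splits)
  qed
  then have "?S \<subseteq> hsem (block_words a b) \<sigma>"
    by (simp add: gfp_upperbound del: fun_upd_apply)
  then show ?thesis by blast
qed

lemma val_word_in_tr:
  assumes "a \<noteq> b"
  shows "msat (\<lambda>i j. j = Suc i) (<) v k f \<Longrightarrow> val_word a b v k \<in> hsem (tr a b n f) \<sigma>"
proof (induction f arbitrary: k n \<sigma>)
  case P
  then show ?case by (subst val_word_unfold) auto
next
  case NP
  then show ?case using assms by (subst val_word_unfold) auto
next
  case (Box1 f)
  let ?W = "val_word a b v"
  let ?S = "{?W k, a ## ?W (Suc k)}"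
  have "?W (Suc k) \<in> hsem (tr a b (Suc n) f) (\<sigma>(n := ?S))"
    using Box1 by simp
  then have "?S \<subseteq> hsem (HAnd (Bx {b} (Var n)) (Bx {a} (tr a b (Suc n) f))) (\<sigma>(n := ?S))"
    using assms val_word_unfold[of a b v k] by auto
  then have "?S \<subseteq> hsem (tr a b n (Box1 f)) \<sigma>"
    by (simp add: gfp_upperbound del: insert_subset)
  then show ?case by blast
next
  case (Box2 f)
  let ?W = "val_word a b v"
  \<comment> \<open>Post-fixpoint witness: the suffixes at block boundaries from k on, and those just after
    a leading b.\<close>
  let ?S = "{t. \<exists>j\<ge>k. t = ?W j \<or> t = a ## ?W (Suc j)}"
  let ?body = "HAnd (HAnd (Bx {b} (Var n)) (Bx {a} (Var n))) (Bx {a} (tr a b (Suc n) f))"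
  have "?S \<subseteq> hsem ?body (\<sigma>(n := ?S))"
  proof
    fix t assume "t \<in> ?S"
    then obtain j where j: "j \<ge> k" "t = ?W j \<or> t = a ## ?W (Suc j)" by auto
    have "?W (Suc j) \<in> hsem (tr a b (Suc n) f) (\<sigma>(n := ?S))"
      using Box2 j by simp
    moreover have "?W (Suc j) \<in> ?S" "a ## ?W (Suc j) \<in> ?S"
      using j by (auto intro: exI[of _ "Suc j"])
    ultimately show "t \<in> hsem ?body (\<sigma>(n := ?S))"
      using j assms val_word_unfold[of a b v j] by (auto split: if_splits)
  qed
  then have "?S \<subseteq> hsem (tr a b n (Box2 f)) \<sigma>"
    by (simp add: gfp_upperbound)
  moreover have "?W k \<in> ?S" by auto
  ultimately show ?case by blast
next
  case (MOr f1 f2)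
  then show ?case by (simp; blast)
next
  case (MAnd f1 f2)
  then show ?case by (simp; blast)
qed

lemma block_words_decompose:
  assumes "t \<in> hsem (block_words a b) \<sigma>"
  shows "\<exists>u. u 0 = t \<and> (\<forall>k. u k = a ## u (Suc k) \<or> u k = b ## a ## u (Suc k))"
proof -
  let ?G = "hsem (block_words a b) \<sigma>"
  have next_block: "\<exists>s'. s' \<in> ?G \<and> (s = a ## s' \<or> s = b ## a ## s')" if "s \<in> ?G" for s
  proof -
    have "s \<in> hsem (HOr (Dia {a} (Var 0)) (Dia {b} (Dia {a} (Var 0)))) (\<sigma>(0 := ?G))"
      using that by (subst (asm) hsem_Max_unfold)
    then show ?thesis by auto
  qed
  have "\<exists>u. \<forall>k. (u k \<in> ?G \<and> (k = 0 \<longrightarrow> u k = t))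
                 \<and> (u k = a ## u (Suc k) \<or> u k = b ## a ## u (Suc k))"
  proof (rule dependent_nat_choice[of "\<lambda>k s. s \<in> ?G \<and> (k = 0 \<longrightarrow> s = t)"
        "\<lambda>_ s s'. s = a ## s' \<or> s = b ## a ## s'"])
    show "\<exists>s. s \<in> ?G \<and> (0 = 0 \<longrightarrow> s = t)" using assms by blast
  next
    fix s and k :: nat assume "s \<in> ?G \<and> (k = 0 \<longrightarrow> s = t)"
    then show "\<exists>s'. (s' \<in> ?G \<and> (Suc k = 0 \<longrightarrow> s' = t)) \<and> (s = a ## s' \<or> s = b ## a ## s')"
      using next_block by blast
  qed
  then show ?thesis by blast
qed

lemma gfp_box_block_step:
  assumes "mono F" and "u k \<in> gfp F"
    and block: "u k = a ## u (Suc k) \<or> u k = b ## a ## u (Suc k)"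
    and boxes: "\<And>S. F S \<subseteq> {t. \<forall>t'. t = b ## t' \<longrightarrow> t' \<in> S} \<inter> {t. \<forall>t'. t = a ## t' \<longrightarrow> t' \<in> Q S}"
  shows "u (Suc k) \<in> Q (gfp F)"
proof -
  have unfold: "s \<in> gfp F \<Longrightarrow> s \<in> F (gfp F)" for s
    using gfp_unfold[OF \<open>mono F\<close>] by simp
  from block show ?thesis
  proof
    assume "u k = a ## u (Suc k)"
    then show ?thesis using unfold[OF \<open>u k \<in> gfp F\<close>] boxes by blast
  next
    assume "u k = b ## a ## u (Suc k)"
    then have "a ## u (Suc k) \<in> gfp F" using unfold[OF \<open>u k \<in> gfp F\<close>] boxes by blast
    then show ?thesis using unfold boxes by blast
  qed
qed

lemma msat_of_block_decomposition:
  assumes block: "\<And>k. u k = a ## u (Suc k) \<or> u k = b ## a ## u (Suc k)"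
  shows "u k \<in> hsem (tr a b n f) \<sigma> \<Longrightarrow> msat (\<lambda>i j. j = Suc i) (<) (\<lambda>i. shd (u i) = b) k f"
proof (induction f arbitrary: k n \<sigma>)
  case P
  then show ?case by auto
next
  case NP
  then show ?case by (cases "u k") auto
next
  case (Box1 f)
  let ?Q = "\<lambda>S. hsem (tr a b (Suc n) f) (\<sigma>(n := S))"
  let ?F = "\<lambda>S. hsem (HAnd (Bx {b} (Var n)) (Bx {a} (tr a b (Suc n) f))) (\<sigma>(n := S))"
  have "u (Suc k) \<in> ?Q (gfp ?F)"
  proof (rule gfp_box_block_step[where F = ?F and Q = ?Q])
    show "mono ?F" by (rule mono_hsem_upd)
    show "u k \<in> gfp ?F" using Box1.prems by simp
  qed (use block in auto)
  then show ?case using Box1.IH by auto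
next
  case (Box2 f)
  let ?Q = "\<lambda>S. hsem (tr a b (Suc n) f) (\<sigma>(n := S))"
  let ?F = "\<lambda>S. hsem (HAnd (HAnd (Bx {b} (Var n)) (Bx {a} (Var n))) (Bx {a} (tr a b (Suc n) f)))
                  (\<sigma>(n := S))"
  have step: "u (Suc j) \<in> gfp ?F \<and> u (Suc j) \<in> ?Q (gfp ?F)" if "u j \<in> gfp ?F" for j
  proof
    show "u (Suc j) \<in> gfp ?F"
      by (rule gfp_box_block_step[where F = ?F and Q = "\<lambda>S. S", OF mono_hsem_upd that block]) auto
    show "u (Suc j) \<in> ?Q (gfp ?F)"
      by (rule gfp_box_block_step[where F = ?F and Q = ?Q, OF mono_hsem_upd that block]) auto
  qed
  have reach: "u (k + i) \<in> gfp ?F" for i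
  proof (induction i)
    case 0
    then show ?case using Box2.prems by (simp only: add_0_right tr.simps hsem.simps(8))
  next
    case (Suc i)
    then show ?case using step by (simp only: add_Suc_right)
  qed
  show ?case
  proof (simp, intro allI impI)
    fix j assume "k < j"
    then obtain i where "j = Suc (k + i)" by (metis less_iff_Suc_add)
    then show "msat (\<lambda>i j. j = Suc i) (<) (\<lambda>i. shd (u i) = b) j f"
      using Box2.IH step[OF reach[of i]] by auto
  qed
next
  case (MOr f1 f2)
  then show ?case by auto
next
  case (MAnd f1 f2)
  then show ?case by auto
qed

theorem mainTheorem19:
  fixes a b :: "'act::finite" and \<phi> :: mform
  assumes "a \<noteq> b"
  shows "((\<exists>(R1::'w \<Rightarrow> 'w \<Rightarrow> bool) R2 V w. kripke_DK4 R1 R2 \<and> msat R1 R2 V w \<phi>)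
            \<longrightarrow> hsemL (trans a b \<phi>) \<noteq> {})
       \<and> (hsemL (trans a b \<phi>) \<noteq> {}
            \<longrightarrow> (\<exists>(R1::nat \<Rightarrow> nat \<Rightarrow> bool) R2 V w. kripke_DK4 R1 R2 \<and> msat R1 R2 V w \<phi>))"
proof (intro conjI impI)
  assume "\<exists>(R1::'w \<Rightarrow> 'w \<Rightarrow> bool) R2 V w. kripke_DK4 R1 R2 \<and> msat R1 R2 V w \<phi>"
  then obtain v where "msat (\<lambda>i j. j = Suc i) (<) v 0 \<phi>"
    using kripke_DK4_sat_imp_linear_sat by metis
  then have "val_word a b v 0 \<in> hsem (tr a b 1 \<phi>) (\<lambda>_. {})"
    by (rule val_word_in_tr[OF assms])
  then have "val_word a b v 0 \<in> hsemL (trans a b \<phi>)"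
    unfolding hsemL_def trans_def hsem.simps(4) by (intro IntI val_word_in_block_words)
  then show "hsemL (trans a b \<phi>) \<noteq> {}" by blast
next
  assume "hsemL (trans a b \<phi>) \<noteq> {}"
  then obtain t where "t \<in> hsem (block_words a b) (\<lambda>_. {})" "t \<in> hsem (tr a b 1 \<phi>) (\<lambda>_. {})"
    by (auto simp: hsemL_def trans_def)
  moreover obtain u where "u 0 = t" "\<And>k. u k = a ## u (Suc k) \<or> u k = b ## a ## u (Suc k)"
    using block_words_decompose[OF \<open>t \<in> hsem (block_words a b) _\<close>] by blast
  ultimately have "msat (\<lambda>i j. j = Suc i) (<) (\<lambda>i. shd (u i) = b) 0 \<phi>"
    using msat_of_block_decomposition by metis
  then show "\<exists>(R1::nat \<Rightarrow> nat \<Rightarrow> bool) R2 V w. kripke_DK4 R1 R2 \<and> msat R1 R2 V w \<phi>"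
    using kripke_DK4_linear by blast
qed

end
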